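(* In the dynamic weighted storage system described in the context, the weight reassignment protocol is live: servers can change their weights over time, i.e., the view installed in the system keeps being changed to its successor view, so that new weights (obtained by pairwise weight reassignments) take effect.
   Context: System: a finite set $S=\{s_1,\dots,s_n\}$ of servers and an infinite set of clients; every process knows $S$; processes communicate over reliable links by message passing; the system is asynchronous (no bounds on processing times or message delays, local clocks are unsynchronized counters); processes fail only by crashing (a process is correct if it does not crash); at most $f$ servers crash and $2f+1\le n$. Views: the system passes through a sequence of views $v_0,v_1,\dots$ with $v_{k+1}=v_k.succ$; $v<w$ means $w$ is obtained from $v$ by applying $succ$ one or more times. Each server $s$ has a current view $s.cview$ (initially $v_0$) and a weight in every view; all weights in $v_0$ equal $1$; in every view every server's weight lies strictly between $\mathbb{wl}=n/(2(n-f))$ and $\mathbb{wu}=n/(2f)$, and the total weight of all servers is at most $n$. A weighted majority (quorum) for view $v$ is a set of servers whose weights in $v$ sum to more than $n/2$. The number of views ever requested is finite. Weights for a view $v.succ$ are changed only by pairwise weight reassignments (a server moves an amount $\epsilon$ of its weight for $v.succ$ to a lower-latency server, respecting the bounds $\mathbb{wl},\mathbb{wu}$) made before the involved servers start changing to $v.succ$. View changer (run by each server $s$ with $s.cview=v$): when a local timeout for $v$ expires, $s$ sends $\langle\text{change\_view},v.succ\rangle$ to all servers. Once $s$ has received or sent a change\_view message for $v.succ$, it: forwards $\langle\text{change\_view},v.succ\rangle$ if not already sent; disables read/write operations; stops accepting pairwise reassignments for $v.succ$; sends $\langle\text{state\_update},(val,ts,cid),v,w\rangle$ to all servers, where $(ts,cid,val)$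 is its register state and $w$ its weight in $v$ (at this point $s$ has uninstalled $v$); waits until it has state\_update messages for view $v$ whose weights sum to more than $n/2$; sets its register to the value with the lexicographically largest $(ts,cid)$ among them; sets $s.cview\leftarrow v.succ$ (it installs $v.succ$), restarts the timeout and re-enables read/write operations. A server requests to change its view by sending change\_view. A view $v$ is installed in the system once some server installs $v$ and no server has a current view greater than $v$; $lastview$ denotes the last view installed in the system, and a view is uninstalled from the system when its successor is installed. *)

theory Defs
  imports Complex_Main
begin

(* ---------- Operational model of the dynamic weighted storage system ----------
   Servers: the elements of a finite type 's (so S = UNIV, n = CARD('s)).
   Views: v_k is represented by k :: nat, v.succ = Suc v, v_0 = 0.
   Register state: (val, ts, cid). *)

type_synonym 'val regst = "'val \<times> nat \<times> nat"

datatype 'val msg =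
    ChangeView nat
  | StateUpdate "'val regst" nat real       (* <state_update, (val,ts,cid), v, w> *)

record ('s, 'val) gstate =
  cview    :: "'s \<Rightarrow> nat"
  changing :: "'s \<Rightarrow> bool"     (* has received/sent change_view for cview.succ *)
  crashed  :: "'s \<Rightarrow> bool"
  reg      :: "'s \<Rightarrow> 'val regst"
  sent     :: "('s \<times> 's \<times> 'val msg) set"      (* (sender, receiver, message) *)
  rcvd     :: "'s \<Rightarrow> ('s \<times> 'val msg) set"  (* (sender, message) received *)

definition lex_le :: "nat \<times> nat \<Rightarrow> nat \<times> nat \<Rightarrow> bool" where
  "lex_le a b \<longleftrightarrow> fst a < fst b \<or> (fst a = fst b \<and> snd a \<le> snd b)"

definition wl :: "nat \<Rightarrow> nat \<Rightarrow> real" where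
  "wl n f = real n / (2 * (real n - real f))"

definition wu :: "nat \<Rightarrow> nat \<Rightarrow> real" where
  "wu n f = real n / (2 * real f)"

(* every weight strictly between wl and wu (wu = +infinity when f = 0), total at most n *)
definition weight_ok :: "nat \<Rightarrow> ('s::finite \<Rightarrow> real) \<Rightarrow> bool" where
  "weight_ok f w \<longleftrightarrow>
     (\<forall>s. wl (card (UNIV :: 's set)) f < w s \<and> (f = 0 \<or> w s < wu (card (UNIV :: 's set)) f)) \<and>
     sum w UNIV \<le> real (card (UNIV :: 's set))"

definition reassign_step :: "nat \<Rightarrow> ('s::finite \<Rightarrow> real) \<Rightarrow> ('s \<Rightarrow> real) \<Rightarrow> bool" where
  "reassign_step f w w' \<longleftrightarrow>
     (\<exists>a b eps. a \<noteq> b \<and> eps > 0 \<and> w' = w(a := w a - eps, b := w b + eps) \<and> weight_ok f w')"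

definition init_state :: "'val regst \<Rightarrow> ('s, 'val) gstate" where
  "init_state r0 = \<lparr> cview = (\<lambda>_. 0), changing = (\<lambda>_. False), crashed = (\<lambda>_. False),
                     reg = (\<lambda>_. r0), sent = {}, rcvd = (\<lambda>_. {}) \<rparr>"

(* s starts changing to (cview s).succ: sends/forwards change_view, disables read/write,
   stops accepting reassignments and sends its state_update for its current view *)
definition start_change ::
  "(nat \<Rightarrow> 's \<Rightarrow> real) \<Rightarrow> ('s, 'val) gstate \<Rightarrow> 's \<Rightarrow> ('s, 'val) gstate" where
  "start_change W st s =
     st\<lparr> changing := (changing st)(s := True),
         sent := sent st
                 \<union> {(s, q, ChangeView (Suc (cview st s))) | q. True}
                 \<union> {(s, q, StateUpdate (reg st s) (cview st s) (W (cview st s) s)) | q. True} \<rparr>"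

definition su_quorum :: "('s::finite, 'val) gstate \<Rightarrow> 's \<Rightarrow> nat \<Rightarrow> ('s \<times> 'val regst \<times> real) set \<Rightarrow> bool" where
  "su_quorum st s v M \<longleftrightarrow>
     finite M \<and> M \<subseteq> {(p, r, w). (p, StateUpdate r v w) \<in> rcvd st s} \<and>
     (\<Sum>(p, r, w)\<in>M. w) > real (card (UNIV :: 's set)) / 2"

inductive step :: "(nat \<Rightarrow> 's::finite \<Rightarrow> real) \<Rightarrow> ('s, 'val) gstate \<Rightarrow> ('s, 'val) gstate \<Rightarrow> bool"
  for W where
  crash_step: "\<not> crashed st s \<Longrightarrow> step W st (st\<lparr> crashed := (crashed st)(s := True) \<rparr>)"
| deliver_step: "(p, q, m) \<in> sent st \<Longrightarrow> \<not> crashed st q \<Longrightarrow>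
     step W st (st\<lparr> rcvd := (rcvd st)(q := insert (p, m) (rcvd st q)) \<rparr>)"
  (* client read/write operations (abstracted): update of the register to a state with
     a not smaller (ts,cid), only while read/write operations are enabled *)
| rw_op: "\<not> crashed st s \<Longrightarrow> \<not> changing st s \<Longrightarrow> lex_le (snd (reg st s)) (snd r) \<Longrightarrow>
     step W st (st\<lparr> reg := (reg st)(s := r) \<rparr>)"
  (* the local timeout for the current view expires (happens at arbitrary times) *)
| timeout_step: "\<not> crashed st s \<Longrightarrow> \<not> changing st s \<Longrightarrow> step W st (start_change W st s)"
| recv_change: "\<not> crashed st s \<Longrightarrow> \<not> changing st s \<Longrightarrow>
     (p, ChangeView (Suc (cview st s))) \<in> rcvd st s \<Longrightarrow> step W st (start_change W st s)"
| install_step: "\<not> crashed st s \<Longrightarrow> changing st s \<Longrightarrow> su_quorum st s (cview st s) M \<Longrightarrow>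
     (p0, r, w0) \<in> M \<Longrightarrow> (\<forall>(p, r', w) \<in> M. lex_le (snd r') (snd r)) \<Longrightarrow>
     step W st (st\<lparr> reg := (reg st)(s := r), cview := (cview st)(s := Suc (cview st s)),
                    changing := (changing st)(s := False) \<rparr>)"

definition execution :: "(nat \<Rightarrow> 's::finite \<Rightarrow> real) \<Rightarrow> 'val regst \<Rightarrow> (nat \<Rightarrow> ('s, 'val) gstate) \<Rightarrow> bool" where
  "execution W r0 \<sigma> \<longleftrightarrow> \<sigma> 0 = init_state r0 \<and>
     (\<forall>i. \<sigma> (Suc i) = \<sigma> i \<or> step W (\<sigma> i) (\<sigma> (Suc i)))"

definition correct :: "(nat \<Rightarrow> ('s, 'val) gstate) \<Rightarrow> 's \<Rightarrow> bool" where
  "correct \<sigma> s \<longleftrightarrow> (\<forall>t. \<not> crashed (\<sigma> t) s)"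

definition en_recv_change :: "('s, 'val) gstate \<Rightarrow> 's \<Rightarrow> bool" where
  "en_recv_change st s \<longleftrightarrow> \<not> crashed st s \<and> \<not> changing st s \<and>
     (\<exists>p. (p, ChangeView (Suc (cview st s))) \<in> rcvd st s)"

definition en_install :: "('s::finite, 'val) gstate \<Rightarrow> 's \<Rightarrow> bool" where
  "en_install st s \<longleftrightarrow> \<not> crashed st s \<and> changing st s \<and> (\<exists>M. M \<noteq> {} \<and> su_quorum st s (cview st s) M)"

(* fairness: reliable links between correct processes, and correct servers eventually
   perform their continuously enabled protocol actions (weak fairness) *)
definition fair :: "(nat \<Rightarrow> ('s::finite, 'val) gstate) \<Rightarrow> bool" where
  "fair \<sigma> \<longleftrightarrow>
     (\<forall>t p q m. (p, q, m) \<in> sent (\<sigma> t) \<and> correct \<sigma> p \<and> correct \<sigma> q \<longrightarrow>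
                (\<exists>t'. (p, m) \<in> rcvd (\<sigma> t') q)) \<and>
     (\<forall>s t. correct \<sigma> s \<and> en_recv_change (\<sigma> t) s \<longrightarrow> (\<exists>t'\<ge>t. \<not> en_recv_change (\<sigma> t') s)) \<and>
     (\<forall>s t. correct \<sigma> s \<and> en_install (\<sigma> t) s \<longrightarrow> (\<exists>t'\<ge>t. \<not> en_install (\<sigma> t') s))"

definition installed_in_system :: "('s, 'val) gstate \<Rightarrow> nat \<Rightarrow> bool" where
  "installed_in_system st w \<longleftrightarrow> (\<exists>s. cview st s = w) \<and> (\<forall>s. cview st s \<le> w)"

end

theory Submission
  imports Defs
begin

text \<open>
  A correct server that has sent change_view for view v + 1 has sent change_view for every
  view 1, ..., v + 1 to every server, and reliable links deliver these messages to every
  correct server. By induction on u \<le> v + 1 every correct server eventually reaches view u: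
  once it is in view u, the change_view message for u + 1 makes it start changing (fairness of
  the change_view handler) and send its state_update for u. At least n - f servers are correct
  and each weighs more than n / (2 (n - f)) in view u, so the correct servers form a weighted
  majority of u; hence every correct server eventually holds a quorum of state_updates and
  installs u + 1. Since a server advances by at most one view per step, the first moment some
  server reaches view v + 1 is a moment at which v + 1 is installed in the system.
\<close>

definition target_view :: "('s, 'val) gstate \<Rightarrow> 's \<Rightarrow> nat" where
  "target_view st p = (if changing st p then Suc (cview st p) else cview st p)"

definition view_change_inv :: "(nat \<Rightarrow> 's \<Rightarrow> real) \<Rightarrow> ('s, 'val) gstate \<Rightarrow> bool" where
  "view_change_inv W st \<longleftrightarrow>
    (\<forall>p q k. (p, q, ChangeView k) \<in> sent st \<longrightarrow> k \<le> target_view st p) \<and>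
    (\<forall>p q k. 0 < k \<and> k \<le> target_view st p \<longrightarrow> (p, q, ChangeView k) \<in> sent st) \<and>
    (\<forall>p u. u < target_view st p \<longrightarrow> (\<exists>r. \<forall>q. (p, q, StateUpdate r u (W u p)) \<in> sent st))"

lemma view_change_inv_start_change:
  assumes inv: "view_change_inv W st" and idle: "\<not> changing st s"
  shows "view_change_inv W (start_change W st s)"
proof -
  let ?st' = "start_change W st s"
  have sent': "sent ?st' = sent st
      \<union> {(s, q, ChangeView (Suc (cview st s))) | q. True}
      \<union> {(s, q, StateUpdate (reg st s) (cview st s) (W (cview st s) s)) | q. True}"
    by (simp add: start_change_def)
  have target': "target_view ?st' p = (if p = s then Suc (cview st s) else target_view st p)" for p
    using idle by (simp add: target_view_def start_change_def)
  have sent_le: "k \<le> target_view st p" if "(p, q, ChangeView k) \<in> sent st" for p q k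
    using inv that unfolding view_change_inv_def by blast
  have sent_upto: "(p, q, ChangeView k) \<in> sent st" if "0 < k" "k \<le> target_view st p" for p q k
    using inv that unfolding view_change_inv_def by blast
  have sent_su: "\<exists>r. \<forall>q. (p, q, StateUpdate r u (W u p)) \<in> sent st" if "u < target_view st p" for p u
    using inv that unfolding view_change_inv_def by blast
  have target_s: "target_view st s = cview st s"
    using idle by (simp add: target_view_def)
  show ?thesis
    unfolding view_change_inv_def
  proof (intro conjI allI impI)
    fix p q k assume "(p, q, ChangeView k) \<in> sent ?st'"
    then have "k \<le> target_view st p \<or> (p = s \<and> k = Suc (cview st s))"
      unfolding sent' using sent_le by blast
    then show "k \<le> target_view ?st' p"
      unfolding target' using target_s by auto
  next
    fix p q k assume "0 < k \<and> k \<le> target_view ?st' p"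
    then have "0 < k \<and> k \<le> target_view st p \<or> (p = s \<and> k = Suc (cview st s))"
      unfolding target' using target_s by (auto split: if_splits)
    then show "(p, q, ChangeView k) \<in> sent ?st'"
      unfolding sent' using sent_upto by blast
  next
    fix p u assume "u < target_view ?st' p"
    then have "u < target_view st p \<or> (p = s \<and> u = cview st s)"
      unfolding target' using target_s by (auto split: if_splits)
    then show "\<exists>r. \<forall>q. (p, q, StateUpdate r u (W u p)) \<in> sent ?st'"
      unfolding sent' using sent_su by blast
  qed
qed

lemma view_change_inv_cong:
  assumes "\<And>p. target_view st' p = target_view st p" "sent st' = sent st"
  shows "view_change_inv W st' = view_change_inv W st"
  using assms by (simp add: view_change_inv_def)

lemma step_start_change_or_same_view_msgs:
  assumes "step W st st'"
  shows "(\<exists>s. \<not> changing st s \<and> st' = start_change W st s)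
    \<or> (\<forall>p. target_view st' p = target_view st p) \<and> sent st' = sent st"
  using assms by (cases rule: step.cases) (auto simp: target_view_def)

lemma step_preserves_view_change_inv:
  assumes "step W st st'" "view_change_inv W st"
  shows "view_change_inv W st'"
  using step_start_change_or_same_view_msgs[OF assms(1)] assms(2)
    view_change_inv_start_change view_change_inv_cong by metis

lemma execution_view_change_inv:
  assumes "execution W r0 \<sigma>"
  shows "view_change_inv W (\<sigma> t)"
proof (induction t)
  case 0
  with assms show ?case
    by (auto simp: execution_def init_state_def view_change_inv_def target_view_def)
next
  case (Suc t)
  with assms show ?case
    using step_preserves_view_change_inv unfolding execution_def by metis
qed

lemma step_monotone:
  assumes "step W st st'"
  shows "target_view st p \<le> target_view st' p \<and> cview st p \<le> cview st' p
    \<and> cview st' p \<le> Suc (cview st p) \<and> sent st \<subseteq> sent st' \<and> rcvd st p \<subseteq> rcvd st' p"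
  using assms by (cases rule: step.cases) (auto simp: target_view_def start_change_def)

lemma execution_step_monotone:
  assumes "execution W r0 \<sigma>"
  shows "target_view (\<sigma> i) p \<le> target_view (\<sigma> (Suc i)) p \<and> cview (\<sigma> i) p \<le> cview (\<sigma> (Suc i)) p
    \<and> cview (\<sigma> (Suc i)) p \<le> Suc (cview (\<sigma> i) p)
    \<and> sent (\<sigma> i) \<subseteq> sent (\<sigma> (Suc i)) \<and> rcvd (\<sigma> i) p \<subseteq> rcvd (\<sigma> (Suc i)) p"
proof -
  have "\<sigma> (Suc i) = \<sigma> i \<or> step W (\<sigma> i) (\<sigma> (Suc i))"
    using assms by (simp add: execution_def)
  then show ?thesis
    using step_monotone[of W "\<sigma> i" "\<sigma> (Suc i)" p] by auto
qed

lemma execution_mono: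
  assumes "execution W r0 \<sigma>" "t1 \<le> t2"
  shows "target_view (\<sigma> t1) p \<le> target_view (\<sigma> t2) p \<and> cview (\<sigma> t1) p \<le> cview (\<sigma> t2) p
    \<and> sent (\<sigma> t1) \<subseteq> sent (\<sigma> t2) \<and> rcvd (\<sigma> t1) p \<subseteq> rcvd (\<sigma> t2) p"
  using assms(2)
proof (induction t2 rule: dec_induct)
  case (step i)
  with execution_step_monotone[OF assms(1), of i p] show ?case
    by (meson le_trans subset_trans)
qed simp

lemma eventually_received:
  assumes "execution W r0 \<sigma>" "fair \<sigma>"
    and "(p, q, m) \<in> sent (\<sigma> t)" "correct \<sigma> p" "correct \<sigma> q"
  shows "\<forall>\<^sub>F t' in sequentially. (p, m) \<in> rcvd (\<sigma> t') q"
proof -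
  obtain t0 where "(p, m) \<in> rcvd (\<sigma> t0) q"
    using assms(2-5) unfolding fair_def by blast
  then have "\<forall>t'\<ge>t0. (p, m) \<in> rcvd (\<sigma> t') q"
    using execution_mono[OF assms(1)] by blast
  then show ?thesis
    unfolding eventually_sequentially by blast
qed

lemma fair_not_eventually_en_recv_change:
  assumes "fair \<sigma>" "correct \<sigma> s"
  shows "\<not> (\<forall>\<^sub>F t in sequentially. en_recv_change (\<sigma> t) s)"
  using assms unfolding fair_def eventually_sequentially by (meson order.refl order_trans)

lemma fair_not_eventually_en_install:
  assumes "fair \<sigma>" "correct \<sigma> s"
  shows "\<not> (\<forall>\<^sub>F t in sequentially. en_install (\<sigma> t) s)"
  using assms unfolding fair_def eventually_sequentially by (meson order.refl order_trans)

lemma weighted_majority_if_card_ge: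
  fixes w :: "'a \<Rightarrow> real"
  assumes "f < n" "n - f \<le> card C" "\<forall>x\<in>C. wl n f < w x"
  shows "real n / 2 < sum w C"
proof -
  have "0 < card C"
    using assms(1,2) by linarith
  then have "finite C" "C \<noteq> {}"
    by (simp_all add: card_gt_0_iff)
  have pos: "0 < real n - real f"
    using assms(1) by simp
  have "real n / 2 = (real n - real f) * wl n f"
    unfolding wl_def using pos by (simp add: field_simps)
  also have "\<dots> \<le> real (card C) * wl n f"
  proof (rule mult_right_mono)
    show "real n - real f \<le> real (card C)"
      using assms(1,2) by linarith
    show "0 \<le> wl n f"
      unfolding wl_def using pos by simp
  qed
  also have "\<dots> = (\<Sum>x\<in>C. wl n f)"
    by simp
  also have "\<dots> < sum w C"
    using \<open>finite C\<close> \<open>C \<noteq> {}\<close> assms(3) by (intro sum_strict_mono) auto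
  finally show ?thesis .
qed

lemma weight_ok_majority_if_few_missing:
  fixes w :: "'s::finite \<Rightarrow> real"
  assumes "2 * f + 1 \<le> card (UNIV :: 's set)" "weight_ok f w" "card (- C) \<le> f"
  shows "real (card (UNIV :: 's set)) / 2 < sum w C"
proof (rule weighted_majority_if_card_ge)
  show "f < card (UNIV :: 's set)"
    using assms(1) by linarith
  have "card (- C) = card (UNIV :: 's set) - card C"
    by (simp add: Compl_eq_Diff_UNIV card_Diff_subset)
  then show "card (UNIV :: 's set) - f \<le> card C"
    using assms(1,3) by linarith
  show "\<forall>x\<in>C. wl (card (UNIV :: 's set)) f < w x"
    using assms(2) unfolding weight_ok_def by blast
qed

lemma ex_su_quorum_if_received:
  fixes st :: "('s::finite, 'val) gstate"
  assumes "finite C" "\<forall>x\<in>C. (x, StateUpdate (R x) v (w x)) \<in> rcvd st s"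
    and "real (card (UNIV :: 's set)) / 2 < sum w C"
  shows "\<exists>M. M \<noteq> {} \<and> su_quorum st s v M"
proof (intro exI conjI)
  let ?M = "(\<lambda>x. (x, R x, w x)) ` C"
  have "(\<Sum>(p, r, w')\<in>?M. w') = sum w C"
    by (subst sum.reindex) (auto simp: inj_on_def)
  with assms show "su_quorum st s v ?M"
    unfolding su_quorum_def by auto
  have "C \<noteq> {}"
  proof
    assume "C = {}"
    with assms(3) show False by simp
  qed
  then show "?M \<noteq> {}"
    by simp
qed

lemma correct_server_starts_change:
  assumes exec: "execution W r0 \<sigma>" and fair: "fair \<sigma>"
    and "correct \<sigma> s" and correct_x: "correct \<sigma> x"
    and "(s, x, ChangeView (Suc u)) \<in> sent (\<sigma> t)" and reached: "u \<le> cview (\<sigma> t0) x"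
  shows "\<exists>t'. Suc u \<le> target_view (\<sigma> t') x"
proof (rule ccontr)
  assume "\<not> ?thesis"
  then have stuck: "target_view (\<sigma> t') x \<le> u" for t'
    by (simp add: not_less_eq_eq)
  have "\<forall>\<^sub>F t' in sequentially. (s, ChangeView (Suc u)) \<in> rcvd (\<sigma> t') x"
    using eventually_received assms(1-5) by blast
  moreover have "\<forall>\<^sub>F t' in sequentially. t0 \<le> t'"
    by simp
  ultimately have "\<forall>\<^sub>F t' in sequentially. en_recv_change (\<sigma> t') x"
  proof eventually_elim
    case (elim t')
    then have "u \<le> cview (\<sigma> t') x"
      using reached execution_mono[OF exec, of t0 t' x] by simp
    then have "cview (\<sigma> t') x = u \<and> \<not> changing (\<sigma> t') x"
      using stuck[of t'] by (auto simp: target_view_def split: if_splits)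
    with elim correct_x show ?case
      unfolding en_recv_change_def correct_def by auto
  qed
  with fair_not_eventually_en_recv_change[OF fair correct_x] show False ..
qed

lemma correct_server_installs:
  fixes \<sigma> :: "nat \<Rightarrow> ('s::finite, 'val) gstate"
  assumes exec: "execution W r0 \<sigma>" and fair: "fair \<sigma>" and correct_p: "correct \<sigma> p"
    and majority: "real (card (UNIV :: 's set)) / 2 < sum (W u) {x. correct \<sigma> x}"
    and started: "\<forall>x. correct \<sigma> x \<longrightarrow> (\<exists>t. Suc u \<le> target_view (\<sigma> t) x)"
  shows "\<exists>t. Suc u \<le> cview (\<sigma> t) p"
proof (rule ccontr)
  define C where "C = {x. correct \<sigma> x}"
  assume "\<not> ?thesis"
  then have stuck: "cview (\<sigma> t) p \<le> u" for t
    by (simp add: not_less_eq_eq)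
  obtain tp where tp: "Suc u \<le> target_view (\<sigma> tp) p"
    using started correct_p by blast
  have "\<exists>r. \<forall>\<^sub>F t in sequentially. (x, StateUpdate r u (W u x)) \<in> rcvd (\<sigma> t) p"
    if "x \<in> C" for x
  proof -
    obtain tx where "Suc u \<le> target_view (\<sigma> tx) x"
      using started \<open>x \<in> C\<close> by (auto simp: C_def)
    then obtain r where "(x, p, StateUpdate r u (W u x)) \<in> sent (\<sigma> tx)"
      using execution_view_change_inv[OF exec, of tx]
      unfolding view_change_inv_def by (meson Suc_le_lessD)
    then have "\<forall>\<^sub>F t in sequentially. (x, StateUpdate r u (W u x)) \<in> rcvd (\<sigma> t) p"
      using eventually_received[OF exec fair] \<open>x \<in> C\<close> correct_p by (simp add: C_def)
    then show ?thesis ..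
  qed
  then obtain R where "\<forall>x\<in>C. \<forall>\<^sub>F t in sequentially. (x, StateUpdate (R x) u (W u x)) \<in> rcvd (\<sigma> t) p"
    by metis
  then have "\<forall>\<^sub>F t in sequentially. \<forall>x\<in>C. (x, StateUpdate (R x) u (W u x)) \<in> rcvd (\<sigma> t) p"
    by (intro eventually_ball_finite) auto
  moreover have "\<forall>\<^sub>F t in sequentially. tp \<le> t"
    by simp
  ultimately have "\<forall>\<^sub>F t in sequentially. en_install (\<sigma> t) p"
  proof eventually_elim
    case (elim t)
    then have "Suc u \<le> target_view (\<sigma> t) p"
      using tp execution_mono[OF exec, of tp t p] by linarith
    then have "cview (\<sigma> t) p = u" "changing (\<sigma> t) p"
      using stuck[of t] by (auto simp: target_view_def split: if_splits)
    moreover have "\<exists>M. M \<noteq> {} \<and> su_quorum (\<sigma> t) p u M"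
      using elim majority by (intro ex_su_quorum_if_received) (auto simp: C_def)
    ultimately show ?case
      using correct_p unfolding en_install_def correct_def by auto
  qed
  with fair_not_eventually_en_install[OF fair correct_p] show False ..
qed

lemma correct_servers_reach_view:
  fixes \<sigma> :: "nat \<Rightarrow> ('s::finite, 'val) gstate"
  assumes exec: "execution W r0 \<sigma>" and fair: "fair \<sigma>"
    and n_f: "2 * f + 1 \<le> card (UNIV :: 's set)" and weights: "\<forall>u. weight_ok f (W u)"
    and crashes: "card {x. \<exists>t'. crashed (\<sigma> t') x} \<le> f" and correct_s: "correct \<sigma> s"
  shows "w \<le> target_view (\<sigma> t) s \<Longrightarrow> correct \<sigma> p \<Longrightarrow> \<exists>t'. w \<le> cview (\<sigma> t') p"
proof (induction w arbitrary: p)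
  case 0
  then show ?case by simp
next
  case (Suc u)
  have "- {x. correct \<sigma> x} = {x. \<exists>t'. crashed (\<sigma> t') x}"
    by (auto simp: correct_def)
  then have majority: "real (card (UNIV :: 's set)) / 2 < sum (W u) {x. correct \<sigma> x}"
    using weight_ok_majority_if_few_missing[OF n_f weights[rule_format, of u]] crashes by simp
  have "\<exists>t'. Suc u \<le> target_view (\<sigma> t') x" if correct_x: "correct \<sigma> x" for x
  proof -
    have "(s, x, ChangeView (Suc u)) \<in> sent (\<sigma> t)"
      using execution_view_change_inv[OF exec, of t] Suc.prems(1)
      unfolding view_change_inv_def by simp
    moreover obtain t0 where "u \<le> cview (\<sigma> t0) x"
      using Suc.IH Suc.prems(1) correct_x by (meson Suc_leD)
    ultimately show ?thesis
      using correct_server_starts_change[OF exec fair correct_s correct_x] by blast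
  qed
  then show ?case
    using correct_server_installs[OF exec fair Suc.prems(2) majority] by blast
qed

lemma installed_in_system_if_reached:
  assumes exec: "execution W r0 \<sigma>" and "w \<le> cview (\<sigma> t) x"
  shows "\<exists>t'. installed_in_system (\<sigma> t') w"
  using assms(2)
proof (induction t arbitrary: x)
  case 0
  then have "installed_in_system (\<sigma> 0) w"
    using exec by (simp add: execution_def init_state_def installed_in_system_def)
  then show ?case ..
next
  case (Suc t)
  show ?case
  proof (cases "\<exists>y. w \<le> cview (\<sigma> t) y")
    case True
    with Suc.IH show ?thesis by blast
  next
    case False
    then have "cview (\<sigma> (Suc t)) y \<le> w" for y
      using execution_step_monotone[OF exec, of t y] by (meson Suc_leI le_trans not_le)
    with Suc.prems have "installed_in_system (\<sigma> (Suc t)) w"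
      unfolding installed_in_system_def by (meson le_antisym)
    then show ?thesis ..
  qed
qed

theorem theorem1:
  fixes W :: "nat \<Rightarrow> 's::finite \<Rightarrow> real"
    and f :: nat
    and r0 :: "'val regst"
    and \<sigma> :: "nat \<Rightarrow> ('s, 'val) gstate"
    and s q :: 's and v t :: nat
  assumes "2 * f + 1 \<le> card (UNIV :: 's set)"
    and "\<forall>x. W 0 x = 1"
    and "\<forall>u. weight_ok f (W u)"
    and "\<forall>u. (reassign_step f)\<^sup>*\<^sup>* (W u) (W (Suc u))"
    and "execution W r0 \<sigma>"
    and "fair \<sigma>"
    and "card {x. \<exists>t'. crashed (\<sigma> t') x} \<le> f"
    and "finite {u. \<exists>t' x y. (x, y, ChangeView u) \<in> sent (\<sigma> t')}"
    and "correct \<sigma> s"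
    and "(s, q, ChangeView (Suc v)) \<in> sent (\<sigma> t)"
  shows "\<exists>t'. installed_in_system (\<sigma> t') (Suc v)"
proof -
  have "Suc v \<le> target_view (\<sigma> t) s"
    using execution_view_change_inv[OF assms(5), of t] assms(10)
    unfolding view_change_inv_def by blast
  then obtain t' where "Suc v \<le> cview (\<sigma> t') s"
    using correct_servers_reach_view[OF assms(5,6,1,3,7,9)] assms(9) by blast
  then show ?thesis
    using installed_in_system_if_reached[OF assms(5)] by blast
qed

end
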